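(* Let $\delta=x^{\mathbf d}f(\theta)$ be a homogeneous differential operator of degree $\mathbf d$ with $-\mathbf d$ in the interior of $\sigma^\vee$, and write $\mathbf d=q\mathbf e$ with $q\in\mathbb Z_{\ge1}$ and $\mathbf e\in\mathbb Z^d$ primitive. Then $\delta$ fixes some nonzero monomial ideal of $R$ if and only if (1) $\operatorname{val}(\mathbf a)>-\infty$ for all $\mathbf a\in S$; (2) for all $\mathbf a\in V'_{\mathrm{mon}}(f)$ and $i=0,\dots,q-1$, $\mathbf a-i\mathbf e\in V_{\mathrm{mon}}(f)$; (3) for all $\mathbf a,\mathbf b\in V'_{\mathrm{mon}}(f)$, $\mathbf a-\mathbf b\notin S-\mathbf e$. In this case the only nonzero monomial ideal fixed by $\delta$ is $I=(x^{\mathbf a}\mid\mathbf a\in V'_{\mathrm{mon}}(f)\cap S)$, and $\operatorname{Exp} I=\{\mathbf a\in S:\operatorname{pval}(\mathbf a)\ge 0\}$.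
   Context: Standing notation. Fix $d\ge 1$. Let $\sigma\subseteq\mathbb R^d$ be a full-dimensional, strongly convex rational polyhedral cone, so $\sigma^\vee$ is full-dimensional and strongly convex. $S=\sigma^\vee\cap\mathbb Z^d$, $R=\mathbb C[S]$ with monomial basis $x^{\mathbf a}$, $\mathbf a\in S$. $h_1,\dots,h_n$ are the primitive support functions of the facets of $\sigma^\vee$, so $S=\{\mathbf a\in\mathbb Z^d:h_i(\mathbf a)\ge0\ \forall i\}$. $(g,m)!=\prod_{j=0}^m(g-j)$ for $m\ge0$, $=1$ for $m<0$; $H_{\mathbf d}=\prod_i(h_i,h_i(-\mathbf d)-1)!$. For $f$ divisible by $H_{\mathbf d}$, $\delta=x^{\mathbf d}f(\theta)$ acts by $\delta(x^{\mathbf a})=f(\mathbf a)x^{\mathbf a+\mathbf d}$. $\operatorname{Exp} I=\{\mathbf a\in S:x^{\mathbf a}\in I\}$; $I$ is $\delta$-fixed if $\delta(I)=I$. $V_{\mathrm{mon}}(f)=\{\mathbf a\in\mathbb Z^d:f(\mathbf a)=0\}$; $S-\mathbf e=\{\mathbf s-\mathbf e:\mathbf s\in S\}$. For $\mathbf a\in\mathbb Z^d$, $\operatorname{val}(\mathbf a)=\inf\{t\in\mathbb R:\mathbf a+t\mathbf d\in V_{\mathrm{mon}}(f)\}\in\mathbb R\cup\{\pm\infty\}$ ($\inf\emptyset=+\infty$). When $\operatorname{val}(\mathbf a)$ is finite, $\operatorname{pval}(\mathbf a)=\max\{t\in[\operatorname{val}(\mathbf a),\operatorname{val}(\mathbf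 a)+1):\mathbf a+t\mathbf d\in V_{\mathrm{mon}}(f)\}$ and $\operatorname{vpt}(\mathbf a)=\mathbf a+\operatorname{pval}(\mathbf a)\mathbf d$. $V'_{\mathrm{mon}}(f)=\{\operatorname{vpt}(\mathbf a):\mathbf a\in\mathbb Z^d,\ \operatorname{val}(\mathbf a)\text{ finite}\}$. *)

theory Defs
  imports "HOL-Analysis.Analysis"
begin

definition rvec :: "int ^ 'n \<Rightarrow> real ^ 'n" where
  "rvec a = (\<chi> i. real_of_int (a $ i))"

definition cvec :: "int ^ 'n \<Rightarrow> complex ^ 'n" where
  "cvec a = (\<chi> i. complex_of_int (a $ i))"

definition primitive :: "int ^ 'n \<Rightarrow> bool" where
  "primitive e \<longleftrightarrow> (\<forall>k::int. (\<forall>i. k dvd e $ i) \<longrightarrow> k dvd 1)"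

definition rational_polyhedral_cone :: "(real ^ 'n) set \<Rightarrow> bool" where
  "rational_polyhedral_cone C \<longleftrightarrow>
     (\<exists>G :: (int ^ 'n) set. finite G \<and>
        C = {\<Sum>g\<in>G. c g *\<^sub>R rvec g | c. \<forall>g\<in>G. 0 \<le> c g})"

definition strongly_convex :: "(real ^ 'n) set \<Rightarrow> bool" where
  "strongly_convex C \<longleftrightarrow> C \<inter> uminus ` C = {0}"

definition full_dimensional :: "(real ^ 'n) set \<Rightarrow> bool" where
  "full_dimensional C \<longleftrightarrow> aff_dim C = int CARD('n)"

definition dual_cone :: "(real ^ 'n) set \<Rightarrow> (real ^ 'n) set" where
  "dual_cone C = {y. \<forall>x\<in>C. 0 \<le> x \<bullet> y}"

(* Primitive support functions of the facets of a cone C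
  (here applied to \<sigma>\<^sup>\<vee>): a primitive lattice vector h, with
  h(a) = h \<bullet> a, nonnegative on C whose zero set on C is a facet. *)
definition facet_support_functions :: "(real ^ 'n) set \<Rightarrow> (int ^ 'n) set" where
  "facet_support_functions C =
     {h. primitive h \<and> (\<forall>y\<in>C. 0 \<le> rvec h \<bullet> y) \<and> {y\<in>C. rvec h \<bullet> y = 0} facet_of C}"

definition lin_int :: "int ^ 'n \<Rightarrow> int ^ 'n \<Rightarrow> int" where
  "lin_int h a = (\<Sum>i\<in>UNIV. h $ i * a $ i)"

definition lin_cplx :: "int ^ 'n \<Rightarrow> complex ^ 'n \<Rightarrow> complex" where
  "lin_cplx h x = (\<Sum>i\<in>UNIV. complex_of_int (h $ i) * x $ i)"

definition semigrp :: "(real ^ 'n) set \<Rightarrow> (int ^ 'n) set" where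
  "semigrp \<sigma> = {a. rvec a \<in> dual_cone \<sigma>}"

section \<open>Polynomials in \<theta> (as polynomial functions on C^d)\<close>

definition poly_fun :: "(complex ^ 'n \<Rightarrow> complex) \<Rightarrow> bool" where
  "poly_fun F \<longleftrightarrow> (\<exists>c :: nat ^ 'n \<Rightarrow> complex. finite {\<alpha>. c \<alpha> \<noteq> 0} \<and>
      F = (\<lambda>x. \<Sum>\<alpha>\<in>{\<alpha>. c \<alpha> \<noteq> 0}. c \<alpha> * (\<Prod>i\<in>UNIV. x $ i ^ (\<alpha> $ i))))"

definition ffact :: "complex \<Rightarrow> int \<Rightarrow> complex" where
  "ffact g m = (if m < 0 then 1 else (\<Prod>j\<in>{0..m}. g - of_int j))"

definition Hpoly :: "(real ^ 'n) set \<Rightarrow> int ^ 'n \<Rightarrow> complex ^ 'n \<Rightarrow> complex" where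
  "Hpoly \<sigma> d x = (\<Prod>h\<in>facet_support_functions (dual_cone \<sigma>).
       ffact (lin_cplx h x) (lin_int h (- d) - 1))"

definition poly_dvd :: "(complex ^ 'n \<Rightarrow> complex) \<Rightarrow> (complex ^ 'n \<Rightarrow> complex) \<Rightarrow> bool" where
  "poly_dvd G F \<longleftrightarrow> (\<exists>Q. poly_fun Q \<and> (\<forall>x. F x = G x * Q x))"

definition ringR :: "(int ^ 'n) set \<Rightarrow> (int ^ 'n \<Rightarrow> complex) set" where
  "ringR S = {p. finite {a. p a \<noteq> 0} \<and> (\<forall>a. p a \<noteq> 0 \<longrightarrow> a \<in> S)}"

definition xmono :: "int ^ 'n \<Rightarrow> (int ^ 'n \<Rightarrow> complex)" where
  "xmono a = (\<lambda>c. if c = a then 1 else 0)"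

definition rmult :: "(int ^ 'n \<Rightarrow> complex) \<Rightarrow> (int ^ 'n \<Rightarrow> complex) \<Rightarrow> (int ^ 'n \<Rightarrow> complex)" where
  "rmult p q = (\<lambda>c. \<Sum>a\<in>{a. p a \<noteq> 0}. p a * q (c - a))"

definition is_ideal :: "(int ^ 'n) set \<Rightarrow> (int ^ 'n \<Rightarrow> complex) set \<Rightarrow> bool" where
  "is_ideal S I \<longleftrightarrow> I \<subseteq> ringR S \<and> (\<lambda>c. 0) \<in> I \<and> (\<forall>p\<in>I. \<forall>q\<in>I. (\<lambda>c. p c + q c) \<in> I)
      \<and> (\<forall>r\<in>ringR S. \<forall>p\<in>I. rmult r p \<in> I)"

definition mono_gen_ideal :: "(int ^ 'n) set \<Rightarrow> (int ^ 'n) set \<Rightarrow> (int ^ 'n \<Rightarrow> complex) set" where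
  "mono_gen_ideal S X = \<Inter>{J. is_ideal S J \<and> (\<forall>a\<in>X. xmono a \<in> J)}"

definition monomial_ideal :: "(int ^ 'n) set \<Rightarrow> (int ^ 'n \<Rightarrow> complex) set \<Rightarrow> bool" where
  "monomial_ideal S I \<longleftrightarrow> (\<exists>X\<subseteq>S. I = mono_gen_ideal S X)"

definition Exp :: "(int ^ 'n) set \<Rightarrow> (int ^ 'n \<Rightarrow> complex) set \<Rightarrow> (int ^ 'n) set" where
  "Exp S I = {a\<in>S. xmono a \<in> I}"

(* The operator \<delta> = x^d f(\<theta>): \<delta>(x^a) = f(a) x^(a+d), extended linearly. *)
definition delta_op :: "int ^ 'n \<Rightarrow> (complex ^ 'n \<Rightarrow> complex) \<Rightarrow> (int ^ 'n \<Rightarrow> complex) \<Rightarrow> (int ^ 'n \<Rightarrow> complex)" where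
  "delta_op d f p = (\<lambda>c. f (cvec (c - d)) * p (c - d))"

definition Vmon :: "(complex ^ 'n \<Rightarrow> complex) \<Rightarrow> (int ^ 'n) set" where
  "Vmon f = {a. f (cvec a) = 0}"

definition val :: "int ^ 'n \<Rightarrow> (complex ^ 'n \<Rightarrow> complex) \<Rightarrow> int ^ 'n \<Rightarrow> ereal" where
  "val d f a = Inf {ereal t | t. rvec a + t *\<^sub>R rvec d \<in> rvec ` Vmon f}"

definition pval :: "int ^ 'n \<Rightarrow> (complex ^ 'n \<Rightarrow> complex) \<Rightarrow> int ^ 'n \<Rightarrow> real" where
  "pval d f a = (let v = real_of_ereal (val d f a) in
      Max {t. v \<le> t \<and> t < v + 1 \<and> rvec a + t *\<^sub>R rvec d \<in> rvec ` Vmon f})"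

definition Vmon' :: "int ^ 'n \<Rightarrow> (complex ^ 'n \<Rightarrow> complex) \<Rightarrow> (int ^ 'n) set" where
  "Vmon' d f = {b. \<exists>a. val d f a \<noteq> \<infinity> \<and> val d f a \<noteq> -\<infinity> \<and>
                        rvec b = rvec a + pval d f a *\<^sub>R rvec d}"

end

theory Submission
  imports Defs
begin

text \<open>Let \<open>E\<close> be the exponent set of a nonzero \<open>\<delta>\<close>-fixed monomial ideal. It is closed under
  adding \<open>S\<close>, and since \<open>-d\<close> is interior to \<open>\<sigma>\<^sup>\<vee>\<close> every line \<open>a + \<int>e\<close> meets \<open>E\<close> in a half-line
  \<open>{a + k e | k \<le> M(a)}\<close>. As \<open>\<delta>(x\<^sup>a) = f(a) x\<^sup>a\<^sup>+\<^sup>d\<close>, the map \<open>a \<mapsto> a + d\<close> carries \<open>E\<close> onto itself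
  exactly away from the zeros of \<open>f\<close>; so on each line the zeros of \<open>f\<close> in \<open>E\<close> are the last
  \<open>q\<close> points, which gives \<open>M(a) = q pval(a)\<close>, \<open>E = {pval \<ge> 0}\<close> and conditions (1)-(3).
  Conversely, under (1)-(3) the set \<open>{a \<in> S | pval(a) \<ge> 0}\<close> has all these properties. The
  divisibility of \<open>f\<close> by \<open>H\<^sub>d\<close> enters only through the fact that \<open>f\<close> vanishes at every
  \<open>a \<in> S\<close> with \<open>a + d \<notin> S\<close>.\<close>

lemma rvec_add: "rvec (a + b) = rvec a + rvec b"
  by (simp add: rvec_def vec_eq_iff)

lemma rvec_diff: "rvec (a - b) = rvec a - rvec b"
  by (simp add: rvec_def vec_eq_iff)

lemma rvec_uminus: "rvec (- a) = - rvec a"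
  by (simp add: rvec_def vec_eq_iff)

lemma rvec_scale: "rvec (k *s a) = real_of_int k *\<^sub>R rvec a"
  by (simp add: rvec_def vec_eq_iff)

lemma rvec_0 [simp]: "rvec 0 = 0"
  by (simp add: rvec_def vec_eq_iff)

lemma rvec_nth: "rvec a $ i = real_of_int (a $ i)"
  by (simp add: rvec_def)

lemma rvec_inject [simp]: "rvec a = rvec b \<longleftrightarrow> a = b"
  by (simp add: rvec_def vec_eq_iff)

lemma rvec_uminus_nonzero: "g \<noteq> 0 \<Longrightarrow> - rvec g \<noteq> 0"
  by (metis neg_equal_0_iff_equal rvec_0 rvec_inject)

lemma inner_rvec: "rvec h \<bullet> rvec a = real_of_int (lin_int h a)"
  by (simp add: rvec_def inner_vec_def lin_int_def)

lemma lin_cplx_cvec: "lin_cplx h (cvec a) = complex_of_int (lin_int h a)"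
  by (simp add: cvec_def lin_cplx_def lin_int_def)

lemma lin_int_add: "lin_int h (a + b) = lin_int h a + lin_int h b"
  by (simp add: lin_int_def sum.distrib algebra_simps)

lemma lin_int_uminus: "lin_int h (- a) = - lin_int h a"
  by (simp add: lin_int_def sum_negf)

lemma add_scale_add: "(a + j *s e) + k *s e = a + (k + j) *s e"
  for a e :: "int ^ 'n"
  by (simp add: vec_eq_iff algebra_simps)

lemma dual_cone_scaleR: "y \<in> dual_cone C \<Longrightarrow> 0 \<le> c \<Longrightarrow> c *\<^sub>R y \<in> dual_cone C"
  by (simp add: dual_cone_def)

lemma dual_cone_add: "y \<in> dual_cone C \<Longrightarrow> z \<in> dual_cone C \<Longrightarrow> y + z \<in> dual_cone C"
  by (simp add: dual_cone_def inner_add_right)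

lemma zero_in_dual_cone: "0 \<in> dual_cone C"
  by (simp add: dual_cone_def)

lemma cInf_int_in:
  fixes X :: "int set"
  assumes "X \<noteq> {}" "bdd_below X"
  shows "Inf X \<in> X"
proof -
  obtain b where b: "\<And>x. x \<in> X \<Longrightarrow> b \<le> x" using assms(2) by (auto simp: bdd_below_def)
  obtain x where x: "x \<in> X" using assms(1) by auto
  have fin: "finite (X \<inter> {b..x})" by simp
  have ne: "x \<in> X \<inter> {b..x}" using b x by simp
  have "Min (X \<inter> {b..x}) \<le> y" if "y \<in> X" for y
    using Min_le[OF fin ne] Min_le[OF fin, of y] b[OF that] that by (cases "y \<le> x") auto
  moreover have "Min (X \<inter> {b..x}) \<in> X" using Min_in[OF fin] ne by blast
  ultimately have "Inf X = Min (X \<inter> {b..x})" by (intro cInf_eq_minimum)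
  then show ?thesis using \<open>Min (X \<inter> {b..x}) \<in> X\<close> by simp
qed

lemma cSup_int_in:
  fixes X :: "int set"
  assumes "X \<noteq> {}" "bdd_above X"
  shows "Sup X \<in> X"
proof -
  have "Inf (uminus ` X) \<in> uminus ` X"
    using assms by (intro cInf_int_in) (auto simp: bdd_above_uminus_image)
  moreover have "Sup X = - Inf (uminus ` X)"
    using assms by (simp add: Inf_int_def Sup_int_def image_image)
  ultimately show ?thesis by auto
qed

lemma primitive_nonzero: "primitive h \<Longrightarrow> h \<noteq> 0"
proof
  assume "primitive h" "h = 0"
  then have "(2::int) dvd 1" unfolding primitive_def by simp
  then show False by simp
qed

lemma Gcd_primitive: "primitive h \<Longrightarrow> Gcd (range (\<lambda>i. h $ i)) = 1"
proof -
  assume p: "primitive h"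
  have "Gcd (range (\<lambda>i. h $ i)) dvd h $ i" for i by (auto intro: Gcd_dvd)
  then have "\<bar>Gcd (range (\<lambda>i. h $ i))\<bar> = 1"
    using p unfolding primitive_def by (simp only: zdvd1_eq[symmetric]) blast
  then show ?thesis using Gcd_int_greater_eq_0 by (metis abs_of_nonneg)
qed

lemma primitive_decomposition:
  fixes g :: "int ^ 'n"
  assumes "g \<noteq> 0"
  obtains h k where "primitive h" "k > 0" "g = k *s h"
proof -
  define k where "k = Gcd (range (\<lambda>i. g $ i))"
  have k0: "k \<noteq> 0" using assms by (auto simp: k_def vec_eq_iff)
  have kpos: "k > 0" using k0 Gcd_int_greater_eq_0 k_def by (metis order_le_less)
  have kd: "k dvd g $ i" for i unfolding k_def by (rule Gcd_dvd) auto
  define h where "h = (\<chi> i. g $ i div k)"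
  have g: "g = k *s h" using kd by (simp add: h_def vec_eq_iff)
  have "primitive h" unfolding primitive_def
  proof (intro allI impI)
    fix m :: int assume "\<forall>i. m dvd h $ i"
    then have "m * k dvd g $ i" for i by (simp add: g)
    then have "m * k dvd k" unfolding k_def by (intro Gcd_greatest) auto
    then have "m * k dvd 1 * k" by simp
    then show "m dvd 1" using k0 by (meson dvd_mult_cancel_right)
  qed
  then show thesis using that kpos g by blast
qed

lemma primitive_real_multiple_int:
  fixes e :: "int ^ 'n" and x :: real
  assumes p: "primitive e" and lattice: "\<forall>i. \<exists>z::int. x * real_of_int (e $ i) = real_of_int z"
  obtains k :: int where "x = real_of_int k"
proof -
  obtain i where i: "e $ i \<noteq> 0" using primitive_nonzero[OF p] by (auto simp: vec_eq_iff)
  obtain n where n: "x * real_of_int (e $ i) = real_of_int n" using lattice by blast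
  define g where "g = gcd n (e $ i)"
  have g0: "g \<noteq> 0" using i by (simp add: g_def)
  define n' m' where "n' = n div g" and "m' = e $ i div g"
  have cop: "coprime m' n'" unfolding n'_def m'_def g_def using i
    by (subst coprime_commute) (intro div_gcd_coprime, simp)
  have "e $ i = g * m'" "n = g * n'" unfolding n'_def m'_def g_def by simp_all
  then have xm': "x * real_of_int m' = real_of_int n'"
    using n g0 by (simp add: algebra_simps)
  have "m' dvd e $ j" for j
  proof -
    obtain z where z: "x * real_of_int (e $ j) = real_of_int z" using lattice by blast
    have "real_of_int (m' * z) = real_of_int (n' * e $ j)"
      by (simp add: z[symmetric] xm'[symmetric] algebra_simps)
    then have "m' dvd n' * e $ j" by (metis dvd_triv_left of_int_eq_iff)
    with cop show ?thesis using coprime_dvd_mult_right_iff by blast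
  qed
  then have "m' dvd 1" using p unfolding primitive_def by blast
  then have "\<bar>m'\<bar> = 1" by simp
  then have "m' = 1 \<or> m' = -1" by linarith
  then show thesis using xm' that[of n'] that[of "- n'"] by auto
qed

lemma same_hyperplane_proportional:
  fixes h1 h2 :: "int ^ 'n"
  assumes eq: "{x. rvec h1 \<bullet> x = 0} = {x. rvec h2 \<bullet> x = 0}" and "h1 $ i \<noteq> 0"
  shows "h1 $ i * h2 $ j = h2 $ i * h1 $ j"
proof -
  define v where "v = real_of_int (h1 $ j) *\<^sub>R axis i (1::real) - real_of_int (h1 $ i) *\<^sub>R axis j 1"
  have "rvec h1 \<bullet> v = 0" by (simp add: v_def inner_diff_right inner_axis rvec_nth)
  then have "rvec h2 \<bullet> v = 0" using eq by blast
  then have "real_of_int (h2 $ i * h1 $ j) = real_of_int (h2 $ j * h1 $ i)"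
    by (simp add: v_def inner_diff_right inner_axis rvec_nth algebra_simps)
  then show ?thesis by (simp only: of_int_eq_iff mult.commute)
qed

lemma primitive_proportional_abs_eq:
  fixes h1 h2 :: "int ^ 'n"
  assumes "primitive h1" "primitive h2" and proportional: "\<And>j. p * h2 $ j = r * h1 $ j"
  shows "\<bar>p\<bar> = \<bar>r\<bar>"
proof -
  have abs_Gcd: "\<bar>c\<bar> = Gcd (range (\<lambda>j. c * h $ j))" if "primitive h" for c and h :: "int ^ 'n"
  proof -
    have "range (\<lambda>j. c * h $ j) = (*) c ` range (\<lambda>j. h $ j)" by auto
    then show ?thesis using Gcd_mult[of c "range (\<lambda>j. h $ j)"] Gcd_primitive[OF that] by simp
  qed
  have "\<bar>p\<bar> = Gcd (range (\<lambda>j. p * h2 $ j))" using abs_Gcd assms(2) .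
  also have "\<dots> = Gcd (range (\<lambda>j. r * h1 $ j))" using proportional by simp
  also have "\<dots> = \<bar>r\<bar>" using abs_Gcd assms(1) by simp
  finally show ?thesis .
qed

locale lattice_cone =
  fixes C :: "(real ^ 'n) set" and G :: "(int ^ 'n) set"
  assumes finite_G: "finite G" and nonzero_G: "0 \<notin> G"
    and C_eq: "C = {y. \<forall>g\<in>G. 0 \<le> rvec g \<bullet> y}"
    and interior_C: "interior C \<noteq> {}"
begin

lemma zero_in_C: "0 \<in> C"
  by (simp add: C_eq)

lemma affine_hull_C: "affine hull C = UNIV"
  using interior_C by (rule affine_hull_nonempty_interior)

lemma aff_dim_C: "aff_dim C = int CARD('n)"
  using aff_dim_nonempty_interior[OF interior_C] by simp

lemma polyhedron_C: "polyhedron C"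
proof -
  define H where "H g = {x. - rvec g \<bullet> x \<le> 0}" for g :: "int ^ 'n"
  have "C = \<Inter> (H ` G)" using C_eq by (auto simp: H_def)
  moreover have "\<exists>a b. a \<noteq> 0 \<and> h = {x. a \<bullet> x \<le> b}" if h: "h \<in> H ` G" for h
  proof -
    obtain g where g: "g \<in> G" "h = H g" using h by blast
    then have "- rvec g \<noteq> 0" using nonzero_G rvec_uminus_nonzero by metis
    then show ?thesis using g(2) unfolding H_def by (intro exI[of _ "- rvec g"] exI[of _ 0]) simp
  qed
  moreover have "finite (H ` G)" using finite_G by simp
  ultimately show ?thesis unfolding polyhedron_def by (intro exI[of _ "H ` G"]) blast
qed

lemma irredundant_generators:
  obtains G' where "G' \<subseteq> G" "C = {y. \<forall>g\<in>G'. 0 \<le> rvec g \<bullet> y}"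
    "\<And>G''. G'' \<subset> G' \<Longrightarrow> C \<noteq> {y. \<forall>g\<in>G''. 0 \<le> rvec g \<bullet> y}"
proof -
  define P where "P G' \<longleftrightarrow> G' \<subseteq> G \<and> C = {y. \<forall>g\<in>G'. 0 \<le> rvec g \<bullet> y}" for G'
  obtain G' where G': "P G'" "\<And>G''. P G'' \<Longrightarrow> card G' \<le> card G''"
    using ex_has_least_nat[of P G card] C_eq by (auto simp: P_def)
  have minimal: "C \<noteq> {y. \<forall>g\<in>G''. 0 \<le> rvec g \<bullet> y}" if "G'' \<subset> G'" for G''
  proof
    assume "C = {y. \<forall>g\<in>G''. 0 \<le> rvec g \<bullet> y}"
    then have "card G' \<le> card G''" using that G' by (auto simp: P_def)
    moreover have "finite G'" using G'(1) finite_G by (auto simp: P_def intro: finite_subset)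
    then have "card G'' < card G'" using that by (rule psubset_card_mono)
    ultimately show False by simp
  qed
  have "G' \<subseteq> G" "C = {y. \<forall>g\<in>G'. 0 \<le> rvec g \<bullet> y}" using G'(1) by (simp_all add: P_def)
  then show thesis using minimal by (rule that)
qed

text \<open>The facets come from an irredundant set of lattice generators, so the separating
  functional can be taken integral.\<close>

lemma separating_facet:
  assumes "y \<notin> C"
  obtains g :: "int ^ 'n" where "g \<noteq> 0" "rvec g \<bullet> y < 0" "\<forall>z\<in>C. 0 \<le> rvec g \<bullet> z"
    "{z\<in>C. rvec g \<bullet> z = 0} facet_of C"
proof -
  obtain G' where G': "G' \<subseteq> G" "C = {y. \<forall>g\<in>G'. 0 \<le> rvec g \<bullet> y}"
    "\<And>G''. G'' \<subset> G' \<Longrightarrow> C \<noteq> {y. \<forall>g\<in>G''. 0 \<le> rvec g \<bullet> y}"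
    using irredundant_generators by blast
  define H where "H g = {x. - rvec g \<bullet> x \<le> 0}" for g :: "int ^ 'n"
  define gen where "gen h = inv_into G' H h" for h
  have gen: "gen h \<in> G'" "H (gen h) = h" if "h \<in> H ` G'" for h
    using that by (auto simp: gen_def inv_into_into f_inv_into_f)
  have nz: "gen h \<noteq> 0" if "h \<in> H ` G'" for h
    using gen(1)[OF that] G'(1) nonzero_G by auto
  have fin: "finite (H ` G')" using G'(1) finite_G by (meson finite_imageI finite_subset)
  have seq: "C = affine hull C \<inter> \<Inter> (H ` G')" using G'(2) affine_hull_C by (auto simp: H_def)
  have faceq: "- rvec (gen h) \<noteq> 0 \<and> h = {x. - rvec (gen h) \<bullet> x \<le> 0}" if "h \<in> H ` G'" for h
    using rvec_uminus_nonzero[OF nz[OF that]] gen(2)[OF that] by (simp add: H_def)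
  have psub: "C \<subset> affine hull C \<inter> \<Inter> F'" if "F' \<subset> H ` G'" for F'
  proof -
    define G'' where "G'' = {g\<in>G'. H g \<in> F'}"
    have "G'' \<subset> G'" using that by (auto simp: G''_def)
    then have "C \<noteq> \<Inter> (H ` G'')" using G'(3) by (auto simp: H_def)
    moreover have "\<Inter> (H ` G'') = \<Inter> F'" using that by (auto simp: G''_def)
    moreover have "C \<subseteq> \<Inter> F'" using G'(2) that by (auto simp: H_def)
    ultimately show ?thesis using affine_hull_C by auto
  qed
  obtain h where h: "h \<in> H ` G'" "y \<notin> h" using assms G'(2) by (auto simp: H_def)
  have "y \<notin> H (gen h)" using h(2) gen(2)[OF h(1)] by simp
  then have y_neg: "rvec (gen h) \<bullet> y < 0" by (simp add: H_def)
  have "C \<inter> {x. - rvec (gen h) \<bullet> x = 0} facet_of C"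
    using facet_of_polyhedron_explicit[OF fin seq faceq psub] h(1) by blast
  moreover have "C \<inter> {x. - rvec (gen h) \<bullet> x = 0} = {z\<in>C. rvec (gen h) \<bullet> z = 0}" by auto
  moreover have "\<forall>z\<in>C. 0 \<le> rvec (gen h) \<bullet> z" using gen(1)[OF h(1)] unfolding G'(2) by blast
  ultimately show thesis using that nz[OF h(1)] y_neg by auto
qed

lemma facet_support_function_negative:
  assumes "y \<notin> C"
  obtains h where "h \<in> facet_support_functions C" "rvec h \<bullet> y < 0"
proof -
  obtain g :: "int ^ 'n" where g: "g \<noteq> 0" "rvec g \<bullet> y < 0" "\<forall>z\<in>C. 0 \<le> rvec g \<bullet> z"
    "{z\<in>C. rvec g \<bullet> z = 0} facet_of C"
    using separating_facet[OF assms] by blast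
  obtain h k where hk: "primitive h" "k > 0" "g = k *s h" using primitive_decomposition[OF g(1)] .
  have rg: "rvec g \<bullet> z = real_of_int k * (rvec h \<bullet> z)" for z by (simp add: hk(3) rvec_scale)
  have "{z\<in>C. rvec h \<bullet> z = 0} = {z\<in>C. rvec g \<bullet> z = 0}" using rg hk(2) by auto
  then have "h \<in> facet_support_functions C"
    using hk g(3,4) rg by (auto simp: facet_support_functions_def zero_le_mult_iff)
  moreover have "rvec h \<bullet> y < 0" using g(2) rg hk(2) by (simp add: mult_less_0_iff)
  ultimately show thesis by (rule that)
qed

lemma span_facet:
  assumes h: "h \<in> facet_support_functions C"
  shows "span {z\<in>C. rvec h \<bullet> z = 0} = {x. rvec h \<bullet> x = 0}"
proof -
  let ?F = "{z\<in>C. rvec h \<bullet> z = 0}"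
  have "?F facet_of C" and "primitive h" using h by (auto simp: facet_support_functions_def)
  then have "aff_dim ?F = int CARD('n) - 1" and hnz: "rvec h \<noteq> 0"
    using aff_dim_C primitive_nonzero by (auto simp: facet_of_def)
  moreover have "0 \<in> affine hull ?F" using zero_in_C by (simp add: hull_inc)
  ultimately have "dim (span ?F) = CARD('n) - 1" by (simp add: aff_dim_eq_dim)
  moreover have "dim {x. rvec h \<bullet> x = 0} = CARD('n) - 1" using dim_hyperplane[OF hnz] by simp
  moreover have "span ?F \<subseteq> {x. rvec h \<bullet> x = 0}"
    by (rule span_minimal) (auto intro: subspace_hyperplane)
  ultimately show ?thesis by (intro subspace_dim_equal) (auto intro: subspace_hyperplane)
qed
lemma facet_support_function_unique:
  assumes h1: "h1 \<in> facet_support_functions C" and h2: "h2 \<in> facet_support_functions C"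
    and eq: "{z\<in>C. rvec h1 \<bullet> z = 0} = {z\<in>C. rvec h2 \<bullet> z = 0}"
  shows "h1 = h2"
proof -
  have p1: "primitive h1" and p2: "primitive h2"
    and pos1: "\<forall>y\<in>C. 0 \<le> rvec h1 \<bullet> y" and pos2: "\<forall>y\<in>C. 0 \<le> rvec h2 \<bullet> y"
    and facet1: "{z\<in>C. rvec h1 \<bullet> z = 0} facet_of C"
    using h1 h2 by (auto simp: facet_support_functions_def)
  obtain i where i: "h1 $ i \<noteq> 0" using primitive_nonzero[OF p1] by (auto simp: vec_eq_iff)
  define p r where "p = h1 $ i" and "r = h2 $ i"
  have proportional: "p * h2 $ j = r * h1 $ j" for j
    using same_hyperplane_proportional[OF _ i] span_facet[OF h1] span_facet[OF h2] eq
    by (simp add: p_def r_def)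
  have "p \<noteq> 0" using i by (simp add: p_def)
  have inner_prop: "real_of_int p * (rvec h2 \<bullet> y) = real_of_int r * (rvec h1 \<bullet> y)" for y
  proof -
    have "real_of_int p *\<^sub>R rvec h2 = real_of_int r *\<^sub>R rvec h1"
      using proportional by (simp add: vec_eq_iff rvec_nth) (metis of_int_mult)
    then show ?thesis by (metis inner_scaleR_left)
  qed
  text \<open>A negative ratio would make the facet all of \<open>C\<close>.\<close>
  have "p * r \<ge> 0"
  proof (rule ccontr)
    assume neg: "\<not> p * r \<ge> 0"
    have "rvec h1 \<bullet> y = 0" if y: "y \<in> C" for y
    proof -
      have "real_of_int (p * r) * (rvec h1 \<bullet> y) = real_of_int p * real_of_int p * (rvec h2 \<bullet> y)"
        using inner_prop[of y] by (simp add: algebra_simps)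
      moreover have "real_of_int p * real_of_int p * (rvec h2 \<bullet> y) \<ge> 0" using pos2 y by simp
      moreover have "real_of_int (p * r) < 0" using neg by linarith
      ultimately show ?thesis using pos1 y by (smt (verit) mult_neg_pos)
    qed
    then have "{z\<in>C. rvec h1 \<bullet> z = 0} = C" by auto
    then show False using facet1 by simp
  qed
  moreover have "p = r \<or> p = - r"
    using primitive_proportional_abs_eq[OF p1 p2 proportional] by (simp add: abs_eq_iff)
  ultimately have "p = r" using \<open>p \<noteq> 0\<close> by (auto simp: zero_le_mult_iff)
  then show "h1 = h2" using proportional \<open>p \<noteq> 0\<close> by (simp add: vec_eq_iff)
qed

lemma finite_facet_support_functions: "finite (facet_support_functions C)"
proof -
  have "inj_on (\<lambda>h. {z\<in>C. rvec h \<bullet> z = 0}) (facet_support_functions C)"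
    by (rule inj_onI) (rule facet_support_function_unique)
  moreover have "(\<lambda>h. {z\<in>C. rvec h \<bullet> z = 0}) ` facet_support_functions C \<subseteq> {F. F facet_of C}"
    by (auto simp: facet_support_functions_def)
  ultimately show ?thesis
    using finite_polyhedron_facets[OF polyhedron_C] by (meson finite_imageD finite_subset)
qed

end

locale lattice_direction =
  fixes f :: "complex ^ 'n \<Rightarrow> complex" and d e :: "int ^ 'n" and q :: int
  assumes q_pos: "q \<ge> 1" and primitive_e: "primitive e" and d_eq: "d = q *s e"
begin

text \<open>On the line \<open>a + \<real> d\<close> the zeros of \<open>f\<close> are the points \<open>a + k e\<close> with \<open>k \<in> zero_steps a\<close>;
  when \<open>val a\<close> is finite, \<open>val a = first_zero a / q\<close> and \<open>pval a = last_zero a / q\<close>.\<close>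

definition zero_steps :: "int ^ 'n \<Rightarrow> int set" where
  "zero_steps a = {k. a + k *s e \<in> Vmon f}"

definition finite_val :: "int ^ 'n \<Rightarrow> bool" where
  "finite_val a \<longleftrightarrow> zero_steps a \<noteq> {} \<and> bdd_below (zero_steps a)"

definition first_zero :: "int ^ 'n \<Rightarrow> int" where
  "first_zero a = Inf (zero_steps a)"

definition last_zero :: "int ^ 'n \<Rightarrow> int" where
  "last_zero a = Max {k\<in>zero_steps a. first_zero a \<le> k \<and> k < first_zero a + q}"

lemma first_zero_in:
  assumes "finite_val a" shows "first_zero a \<in> zero_steps a"
  using assms cInf_int_in by (auto simp: finite_val_def first_zero_def)

lemma first_zero_le:
  assumes "finite_val a" "k \<in> zero_steps a" shows "first_zero a \<le> k"
  using assms by (auto simp: finite_val_def first_zero_def intro: cInf_lower)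

lemma finite_first_window: "finite {k\<in>zero_steps a. first_zero a \<le> k \<and> k < first_zero a + q}"
  by (rule finite_subset[of _ "{first_zero a..<first_zero a + q}"]) auto

lemma last_zero:
  assumes "finite_val a"
  shows "last_zero a \<in> zero_steps a" "first_zero a \<le> last_zero a" "last_zero a < first_zero a + q"
    and "\<And>k. k \<in> zero_steps a \<Longrightarrow> k < first_zero a + q \<Longrightarrow> k \<le> last_zero a"
proof -
  let ?W = "{k\<in>zero_steps a. first_zero a \<le> k \<and> k < first_zero a + q}"
  have "first_zero a \<in> ?W" using first_zero_in[OF assms] q_pos by auto
  then have "last_zero a \<in> ?W" unfolding last_zero_def using finite_first_window by (intro Max_in) auto
  then show "last_zero a \<in> zero_steps a" "first_zero a \<le> last_zero a" "last_zero a < first_zero a + q"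
    by auto
  show "k \<le> last_zero a" if "k \<in> zero_steps a" "k < first_zero a + q" for k
    unfolding last_zero_def using finite_first_window that first_zero_le[OF assms] by (intro Max_ge) auto
qed

lemma last_zeroI:
  assumes "finite_val a" "k \<in> zero_steps a" "first_zero a \<le> k" "k < first_zero a + q"
    and "\<And>k'. k' \<in> zero_steps a \<Longrightarrow> k' < first_zero a + q \<Longrightarrow> k' \<le> k"
  shows "last_zero a = k"
proof (rule order_antisym)
  show "last_zero a \<le> k" using assms(5) last_zero(1,3)[OF assms(1)] by blast
  show "k \<le> last_zero a" using last_zero(4)[OF assms(1)] assms(2,4) by blast
qed

lemma zero_steps_shift: "zero_steps (a + j *s e) = (\<lambda>k. k - j) ` zero_steps a"
proof -
  have "k \<in> zero_steps (a + j *s e) \<longleftrightarrow> k + j \<in> zero_steps a" for k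
    by (simp add: zero_steps_def add_scale_add)
  then show ?thesis by (force intro: image_eqI[of _ _ "_ + j"])
qed

lemma finite_val_shift: "finite_val (a + j *s e) \<longleftrightarrow> finite_val a"
proof -
  have "bdd_below ((\<lambda>k. k - j) ` Z) \<longleftrightarrow> bdd_below Z" for Z :: "int set"
    by (auto simp: bdd_below_def) (metis add.commute le_diff_eq, metis diff_mono order_refl)
  then show ?thesis by (simp add: finite_val_def zero_steps_shift)
qed

lemma first_zero_shift: "finite_val a \<Longrightarrow> first_zero (a + j *s e) = first_zero a - j"
  unfolding first_zero_def zero_steps_shift
  by (intro cInf_eq_minimum) (auto intro: first_zero_in first_zero_le simp: first_zero_def[symmetric])

lemma last_zero_shift:
  assumes "finite_val a"
  shows "last_zero (a + j *s e) = last_zero a - j"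
proof (rule last_zeroI)
  show "finite_val (a + j *s e)" using assms by (simp add: finite_val_shift)
  show "last_zero a - j \<in> zero_steps (a + j *s e)"
    using last_zero(1)[OF assms] by (simp add: zero_steps_shift)
  show "first_zero (a + j *s e) \<le> last_zero a - j" "last_zero a - j < first_zero (a + j *s e) + q"
    using last_zero(2,3)[OF assms] first_zero_shift[OF assms] by simp_all
  show "k \<le> last_zero a - j" if "k \<in> zero_steps (a + j *s e)" "k < first_zero (a + j *s e) + q" for k
    using that last_zero(4)[OF assms, of "k + j"] first_zero_shift[OF assms] zero_steps_shift by force
qed

lemma rvec_d: "rvec d = real_of_int q *\<^sub>R rvec e"
  by (simp add: d_eq rvec_scale)

text \<open>Since \<open>e\<close> is primitive, the lattice points of \<open>a + \<real> d\<close> are exactly the points \<open>a + k e\<close>.\<close>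

lemma zeros_on_line:
  "{t. rvec a + t *\<^sub>R rvec d \<in> rvec ` Vmon f} = (\<lambda>k. real_of_int k / real_of_int q) ` zero_steps a"
proof (intro set_eqI iffI)
  fix t assume "t \<in> {t. rvec a + t *\<^sub>R rvec d \<in> rvec ` Vmon f}"
  then obtain b where b: "b \<in> Vmon f" "rvec a + t *\<^sub>R rvec d = rvec b" by auto
  have "(t * real_of_int q) * real_of_int (e $ i) = real_of_int (b $ i - a $ i)" for i
    using arg_cong[OF b(2), of "\<lambda>x. x $ i"] by (simp add: rvec_d rvec_nth algebra_simps)
  then obtain k where k: "t * real_of_int q = real_of_int k"
    using primitive_real_multiple_int[OF primitive_e] by blast
  then have "rvec (a + k *s e) = rvec b" using b(2) by (simp add: rvec_add rvec_scale rvec_d)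
  then have "k \<in> zero_steps a" using b(1) by (simp add: zero_steps_def)
  moreover have "t = real_of_int k / real_of_int q" using k q_pos by (simp add: field_simps)
  ultimately show "t \<in> (\<lambda>k. real_of_int k / real_of_int q) ` zero_steps a" by blast
next
  fix t assume "t \<in> (\<lambda>k. real_of_int k / real_of_int q) ` zero_steps a"
  then obtain k where k: "k \<in> zero_steps a" "t = real_of_int k / real_of_int q" by blast
  have "rvec a + t *\<^sub>R rvec d = rvec (a + k *s e)"
    using k(2) q_pos by (simp add: rvec_add rvec_scale rvec_d)
  then show "t \<in> {t. rvec a + t *\<^sub>R rvec d \<in> rvec ` Vmon f}" using k(1) by (auto simp: zero_steps_def)
qed

lemma val_eq_Inf: "val d f a = Inf (ereal ` (\<lambda>k. real_of_int k / real_of_int q) ` zero_steps a)"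
proof -
  have "{ereal t | t. rvec a + t *\<^sub>R rvec d \<in> rvec ` Vmon f}
      = ereal ` {t. rvec a + t *\<^sub>R rvec d \<in> rvec ` Vmon f}" by blast
  then show ?thesis unfolding val_def zeros_on_line by simp
qed

lemma val_empty: "zero_steps a = {} \<Longrightarrow> val d f a = \<infinity>"
  by (simp add: val_eq_Inf top_ereal_def)

lemma val_finite:
  assumes "finite_val a" shows "val d f a = ereal (real_of_int (first_zero a) / real_of_int q)"
  unfolding val_eq_Inf
proof (rule Inf_eqI)
  fix x assume "x \<in> ereal ` (\<lambda>k. real_of_int k / real_of_int q) ` zero_steps a"
  then obtain k where "k \<in> zero_steps a" "x = ereal (real_of_int k / real_of_int q)" by blast
  then show "ereal (real_of_int (first_zero a) / real_of_int q) \<le> x"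
    using first_zero_le[OF assms] q_pos by (simp add: divide_right_mono)
qed (use first_zero_in[OF assms] in blast)

lemma val_unbounded: "\<not> bdd_below (zero_steps a) \<Longrightarrow> val d f a = -\<infinity>"
proof (rule ereal_bot)
  fix B
  assume "\<not> bdd_below (zero_steps a)"
  then obtain k where k: "k \<in> zero_steps a" "k < \<lfloor>B * real_of_int q\<rfloor>"
    unfolding bdd_below_def by (meson not_le)
  then have "real_of_int k / real_of_int q < B" using q_pos by (simp add: divide_less_eq) linarith
  moreover have "val d f a \<le> ereal (real_of_int k / real_of_int q)"
    unfolding val_eq_Inf using k(1) by (intro Inf_lower) auto
  ultimately show "val d f a \<le> ereal B" by (meson ereal_less_eq(3) less_imp_le order.trans)
qed

lemma val_finite_iff: "val d f a \<noteq> \<infinity> \<and> val d f a \<noteq> -\<infinity> \<longleftrightarrow> finite_val a"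
proof (cases "zero_steps a = {}")
  case True then show ?thesis by (simp add: val_empty finite_val_def)
next
  case False then show ?thesis
    using val_finite[of a] val_unbounded[of a] by (cases "bdd_below (zero_steps a)") (auto simp: finite_val_def)
qed

lemma val_gt_MInf_iff: "val d f a > -\<infinity> \<longleftrightarrow> zero_steps a = {} \<or> bdd_below (zero_steps a)"
proof (cases "zero_steps a = {}")
  case True then show ?thesis by (simp add: val_empty)
next
  case False then show ?thesis
    using val_finite[of a] val_unbounded[of a] by (cases "bdd_below (zero_steps a)") (auto simp: finite_val_def)
qed

lemma pval_finite:
  assumes "finite_val a" shows "pval d f a = real_of_int (last_zero a) / real_of_int q"
proof -
  let ?r = "\<lambda>k. real_of_int k / real_of_int q"
  have q: "real_of_int q > 0" using q_pos by simp
  have on_line: "rvec a + t *\<^sub>R rvec d \<in> rvec ` Vmon f \<longleftrightarrow> t \<in> ?r ` zero_steps a" for t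
    using zeros_on_line[of a] by (metis mem_Collect_eq)
  have "?r (first_zero a) \<le> ?r k \<and> ?r k < ?r (first_zero a) + 1 \<longleftrightarrow>
      first_zero a \<le> k \<and> k < first_zero a + q" for k
    using q by (simp add: divide_le_cancel field_simps flip: of_int_add)
  then have window: "{t. ?r (first_zero a) \<le> t \<and> t < ?r (first_zero a) + 1 \<and>
        rvec a + t *\<^sub>R rvec d \<in> rvec ` Vmon f}
      = ?r ` {k\<in>zero_steps a. first_zero a \<le> k \<and> k < first_zero a + q}"
    unfolding on_line by auto
  have "Max (?r ` {k\<in>zero_steps a. first_zero a \<le> k \<and> k < first_zero a + q}) = ?r (last_zero a)"
    using last_zero[OF assms] q finite_first_window
    by (intro Max_eqI) (auto intro!: divide_right_mono)
  then show ?thesis unfolding pval_def Let_def val_finite[OF assms] real_of_ereal.simps window .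
qed

lemma Vmon'_eq: "Vmon' d f = {a + last_zero a *s e | a. finite_val a}"
proof -
  have vpt: "rvec a + pval d f a *\<^sub>R rvec d = rvec (a + last_zero a *s e)" if "finite_val a" for a
    using that q_pos by (simp add: pval_finite rvec_d rvec_add rvec_scale)
  have "Vmon' d f = {b. \<exists>a. finite_val a \<and> rvec b = rvec a + pval d f a *\<^sub>R rvec d}"
    by (simp add: Vmon'_def conj_assoc[symmetric] val_finite_iff)
  also have "\<dots> = {a + last_zero a *s e | a. finite_val a}" using vpt by auto
  finally show ?thesis .
qed

end

definition support_ideal :: "(int ^ 'n) set \<Rightarrow> (int ^ 'n) set \<Rightarrow> (int ^ 'n \<Rightarrow> complex) set" where
  "support_ideal S E = {p\<in>ringR S. \<forall>c. p c \<noteq> 0 \<longrightarrow> c \<in> E}"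

lemma support_ideal_zero: "(\<lambda>c. 0) \<in> support_ideal S E"
  by (simp add: support_ideal_def ringR_def)

lemma finite_support_ideal: "p \<in> support_ideal S E \<Longrightarrow> finite {a. p a \<noteq> 0}"
  by (simp add: support_ideal_def ringR_def)

lemma support_ideal_memI:
  "finite {a. p a \<noteq> 0} \<Longrightarrow> E \<subseteq> S \<Longrightarrow> (\<And>c. p c \<noteq> 0 \<Longrightarrow> c \<in> E) \<Longrightarrow> p \<in> support_ideal S E"
  by (auto simp: support_ideal_def ringR_def)

lemma xmono_in_support_ideal: "a \<in> E \<Longrightarrow> E \<subseteq> S \<Longrightarrow> xmono a \<in> support_ideal S E"
  by (auto simp: support_ideal_def ringR_def xmono_def)

lemma rmult_xmono:
  assumes "finite {a. r a \<noteq> 0}" shows "rmult r (xmono x) = (\<lambda>y. r (y - x))"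
proof
  fix y
  have "rmult r (xmono x) y = (\<Sum>a\<in>{a. r a \<noteq> 0}. if a = y - x then r a else 0)"
    unfolding rmult_def xmono_def by (rule sum.cong) auto
  also have "\<dots> = r (y - x)" using assms by (simp add: sum.delta')
  finally show "rmult r (xmono x) y = r (y - x)" .
qed

lemma is_ideal_support_ideal:
  assumes ES: "E \<subseteq> S" and up: "\<And>x s. x \<in> E \<Longrightarrow> s \<in> S \<Longrightarrow> x + s \<in> E"
  shows "is_ideal S (support_ideal S E)"
  unfolding is_ideal_def
proof (intro conjI ballI)
  show "support_ideal S E \<subseteq> ringR S" by (auto simp: support_ideal_def)
  show "(\<lambda>c. 0) \<in> support_ideal S E" by (rule support_ideal_zero)
next
  fix p q assume p: "p \<in> support_ideal S E" and q: "q \<in> support_ideal S E"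
  have "{a. p a + q a \<noteq> 0} \<subseteq> {a. p a \<noteq> 0} \<union> {a. q a \<noteq> 0}" by auto
  then have "finite {a. p a + q a \<noteq> 0}"
    using finite_support_ideal[OF p] finite_support_ideal[OF q] by (meson finite_UnI finite_subset)
  moreover have "c \<in> E" if "p c + q c \<noteq> 0" for c
    using that p q by (cases "p c = 0") (auto simp: support_ideal_def)
  ultimately show "(\<lambda>c. p c + q c) \<in> support_ideal S E" using ES by (intro support_ideal_memI)
next
  fix r p assume r: "r \<in> ringR S" and p: "p \<in> support_ideal S E"
  have fr: "finite {a. r a \<noteq> 0}" using r by (simp add: ringR_def)
  have decomp: "\<exists>a b. r a \<noteq> 0 \<and> p b \<noteq> 0 \<and> c = b + a" if "rmult r p c \<noteq> 0" for c
  proof -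
    from that obtain a where "a \<in> {a. r a \<noteq> 0}" "r a * p (c - a) \<noteq> 0"
      unfolding rmult_def by (meson sum.neutral)
    then show ?thesis by (intro exI[of _ a] exI[of _ "c - a"]) auto
  qed
  have "{c. rmult r p c \<noteq> 0} \<subseteq> (\<lambda>(a, b). b + a) ` ({a. r a \<noteq> 0} \<times> {b. p b \<noteq> 0})"
    using decomp by fastforce
  then have "finite {c. rmult r p c \<noteq> 0}"
    using fr finite_support_ideal[OF p] by (meson finite_SigmaI finite_imageI finite_subset)
  moreover have "c \<in> E" if "rmult r p c \<noteq> 0" for c
    using decomp[OF that] r p up by (force simp: ringR_def support_ideal_def)
  ultimately show "rmult r p \<in> support_ideal S E" using ES by (intro support_ideal_memI)
qed

text \<open>Every element of \<open>support_ideal S (X + S)\<close> is a finite sum of terms \<open>c x\<^sup>s \<cdot> x\<^sup>a\<close> with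
  \<open>a \<in> X\<close>, \<open>s \<in> S\<close>.\<close>

lemma support_ideal_subset_ideal:
  assumes J: "is_ideal S J" and gen: "\<forall>a\<in>X. xmono a \<in> J"
  shows "support_ideal S (X + S) \<subseteq> J"
proof
  fix p assume p: "p \<in> support_ideal S (X + S)"
  have J0: "(\<lambda>c. 0) \<in> J" and Jadd: "\<And>u v. u \<in> J \<Longrightarrow> v \<in> J \<Longrightarrow> (\<lambda>c. u c + v c) \<in> J"
    and Jmult: "\<And>r u. r \<in> ringR S \<Longrightarrow> u \<in> J \<Longrightarrow> rmult r u \<in> J"
    using J by (auto simp: is_ideal_def)
  have monomial_term: "(\<lambda>y. if y = c then p c else 0) \<in> J" if "p c \<noteq> 0" for c
  proof -
    have "c \<in> X + S" using p that by (auto simp: support_ideal_def)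
    then obtain x s where xs: "x \<in> X" "s \<in> S" "c = x + s" by (auto simp: set_plus_def)
    define r where "r = (\<lambda>y. if y = s then p c else 0)"
    have fr: "finite {a. r a \<noteq> 0}" by (rule finite_subset[of _ "{s}"]) (auto simp: r_def)
    then have "r \<in> ringR S" using xs(2) by (auto simp: ringR_def r_def)
    then have "rmult r (xmono x) \<in> J" using gen xs(1) Jmult by blast
    moreover have "rmult r (xmono x) = (\<lambda>y. if y = c then p c else 0)"
      unfolding rmult_xmono[OF fr] by (auto simp: r_def xs(3) algebra_simps)
    ultimately show ?thesis by simp
  qed
  have partial_sum: "(\<lambda>y. if y \<in> A then p y else 0) \<in> J" if "finite A" "A \<subseteq> {c. p c \<noteq> 0}" for A
    using that
  proof (induction A rule: finite_induct)
    case empty then show ?case using J0 by simp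
  next
    case (insert c A)
    then have "(\<lambda>y. (if y = c then p c else 0) + (if y \<in> A then p y else 0)) \<in> J"
      using Jadd[OF monomial_term] by simp
    moreover have "(\<lambda>y. (if y = c then p c else 0) + (if y \<in> A then p y else 0))
        = (\<lambda>y. if y \<in> insert c A then p y else 0)" using insert(2) by auto
    ultimately show ?case by simp
  qed
  have "(\<lambda>y. if y \<in> {c. p c \<noteq> 0} then p y else 0) \<in> J"
    using partial_sum[OF finite_support_ideal[OF p] order_refl] .
  moreover have "(\<lambda>y. if y \<in> {c. p c \<noteq> 0} then p y else 0) = p" by auto
  ultimately show "p \<in> J" by simp
qed

lemma mono_gen_ideal_eq_support_ideal:
  assumes S0: "0 \<in> S" and S_add: "\<And>a b. a \<in> S \<Longrightarrow> b \<in> S \<Longrightarrow> a + b \<in> S" and X: "X \<subseteq> S"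
  shows "mono_gen_ideal S X = support_ideal S (X + S)"
proof -
  have ES: "X + S \<subseteq> S" using X S_add by (auto simp: set_plus_def)
  have up: "y + s \<in> X + S" if "y \<in> X + S" "s \<in> S" for y s
    using that S_add by (fastforce simp: set_plus_def add.assoc)
  have "X \<subseteq> X + S" using S0 by (force simp: set_plus_def)
  then have "\<forall>a\<in>X. xmono a \<in> support_ideal S (X + S)" using ES by (auto intro: xmono_in_support_ideal)
  then show ?thesis unfolding mono_gen_ideal_def using is_ideal_support_ideal[OF ES up]
    by (intro antisym Inter_lower Inter_greatest) (auto dest: support_ideal_subset_ideal)
qed

lemma Exp_support_ideal:
  assumes "E \<subseteq> S" shows "Exp S (support_ideal S E) = E"
proof -
  have "a \<in> E" if "xmono a \<in> support_ideal S E" for a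
    using that unfolding support_ideal_def xmono_def by force
  then show ?thesis using assms xmono_in_support_ideal by (auto simp: Exp_def)
qed

lemma support_ideal_empty: "support_ideal S {} = {\<lambda>c. 0}"
  by (auto simp: support_ideal_def ringR_def)

lemma support_ideal_nonzero: "E \<noteq> {} \<Longrightarrow> E \<subseteq> S \<Longrightarrow> support_ideal S E \<noteq> {\<lambda>c. 0}"
  by (metis equals0I singletonD xmono_def xmono_in_support_ideal zero_neq_one)

lemma delta_op_image_support_ideal_iff:
  assumes ES: "E \<subseteq> S"
  shows "delta_op d f ` support_ideal S E = support_ideal S E \<longleftrightarrow>
    (\<forall>a. a + d \<in> E \<longleftrightarrow> a \<in> E \<and> f (cvec a) \<noteq> 0)"
proof
  assume fixed: "delta_op d f ` support_ideal S E = support_ideal S E"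
  show "\<forall>a. a + d \<in> E \<longleftrightarrow> a \<in> E \<and> f (cvec a) \<noteq> 0"
  proof (intro allI iffI)
    fix a assume "a + d \<in> E"
    then have "xmono (a + d) \<in> delta_op d f ` support_ideal S E"
      using fixed ES by (simp add: xmono_in_support_ideal)
    then obtain p where p: "p \<in> support_ideal S E" "xmono (a + d) = delta_op d f p" by blast
    have "f (cvec a) * p a = 1"
      using fun_cong[OF p(2), of "a + d"] by (simp add: delta_op_def xmono_def)
    then have "p a \<noteq> 0" "f (cvec a) \<noteq> 0" by auto
    then show "a \<in> E \<and> f (cvec a) \<noteq> 0" using p(1) by (simp add: support_ideal_def)
  next
    fix a assume a: "a \<in> E \<and> f (cvec a) \<noteq> 0"
    then have "delta_op d f (xmono a) \<in> support_ideal S E"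
      using fixed ES xmono_in_support_ideal by blast
    moreover have "delta_op d f (xmono a) (a + d) \<noteq> 0" using a by (simp add: delta_op_def xmono_def)
    ultimately show "a + d \<in> E" by (auto simp: support_ideal_def)
  qed
next
  assume shift: "\<forall>a. a + d \<in> E \<longleftrightarrow> a \<in> E \<and> f (cvec a) \<noteq> 0"
  then have shift': "c \<in> E \<longleftrightarrow> c - d \<in> E \<and> f (cvec (c - d)) \<noteq> 0" for c
    by (metis diff_add_cancel)
  show "delta_op d f ` support_ideal S E = support_ideal S E"
  proof (intro antisym subsetI)
    fix r assume "r \<in> delta_op d f ` support_ideal S E"
    then obtain p where p: "p \<in> support_ideal S E" "r = delta_op d f p" by blast
    have "{c. r c \<noteq> 0} \<subseteq> (\<lambda>a. a + d) ` {a. p a \<noteq> 0}"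
      using p(2) by (auto simp: delta_op_def intro: image_eqI[of _ _ "_ - d"])
    then have "finite {c. r c \<noteq> 0}" using finite_support_ideal[OF p(1)] by (meson finite_imageI finite_subset)
    moreover have "c \<in> E" if "r c \<noteq> 0" for c
    proof -
      have "p (c - d) \<noteq> 0" "f (cvec (c - d)) \<noteq> 0" using that p(2) by (auto simp: delta_op_def)
      then show ?thesis using p(1) shift'[of c] by (simp add: support_ideal_def)
    qed
    ultimately show "r \<in> support_ideal S E" using ES by (intro support_ideal_memI)
  next
    fix r assume r: "r \<in> support_ideal S E"
    define p where "p a = (if f (cvec a) = 0 then 0 else r (a + d) / f (cvec a))" for a
    have "{a. p a \<noteq> 0} \<subseteq> (\<lambda>b. b - d) ` {a. r a \<noteq> 0}"
      by (auto simp: p_def intro: image_eqI[of _ _ "_ + d"] split: if_splits)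
    then have "finite {a. p a \<noteq> 0}" using finite_support_ideal[OF r] by (meson finite_imageI finite_subset)
    moreover have "a \<in> E" if "p a \<noteq> 0" for a
      using that r shift by (auto simp: p_def support_ideal_def split: if_splits)
    ultimately have "p \<in> support_ideal S E" using ES by (intro support_ideal_memI)
    moreover have "delta_op d f p = r"
    proof
      fix c
      have "r c = 0" if "f (cvec (c - d)) = 0"
        using that r shift'[of c] by (auto simp: support_ideal_def)
      then show "delta_op d f p c = r c" by (simp add: delta_op_def p_def)
    qed
    ultimately show "r \<in> delta_op d f ` support_ideal S E" by blast
  qed
qed

lemma dual_cone_lattice_cone:
  assumes "rational_polyhedral_cone \<sigma>" "interior (dual_cone \<sigma>) \<noteq> {}"
  obtains G where "lattice_cone (dual_cone \<sigma>) G"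
proof -
  obtain G where G: "finite G" "\<sigma> = {\<Sum>g\<in>G. c g *\<^sub>R rvec g | c. \<forall>g\<in>G. 0 \<le> c g}"
    using assms(1) by (auto simp: rational_polyhedral_cone_def)
  have "rvec g \<in> \<sigma>" if "g \<in> G" for g
  proof -
    have "(\<Sum>g'\<in>G. (if g' = g then 1 else 0) *\<^sub>R rvec g') = (\<Sum>g'\<in>G. if g' = g then rvec g' else 0)"
      by (rule sum.cong) auto
    also have "\<dots> = rvec g" using that G(1) by simp
    finally have "rvec g = (\<Sum>g'\<in>G. (if g' = g then 1 else 0) *\<^sub>R rvec g')" ..
    then show ?thesis unfolding G(2) by (intro CollectI exI[of _ "\<lambda>g'. if g' = g then 1 else 0"]) simp
  qed
  moreover have "0 \<le> x \<bullet> y" if x: "x \<in> \<sigma>" and y: "\<forall>g\<in>G. 0 \<le> rvec g \<bullet> y" for x y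
  proof -
    obtain c where c: "\<forall>g\<in>G. 0 \<le> c g" "x = (\<Sum>g\<in>G. c g *\<^sub>R rvec g)" using x G(2) by auto
    then show ?thesis using y by (auto simp: inner_sum_left intro!: sum_nonneg)
  qed
  ultimately have "dual_cone \<sigma> = {y. \<forall>g\<in>G. 0 \<le> rvec g \<bullet> y}" by (auto simp: dual_cone_def)
  then have "dual_cone \<sigma> = {y. \<forall>g\<in>G - {0}. 0 \<le> rvec g \<bullet> y}" by auto
  then have "lattice_cone (dual_cone \<sigma>) (G - {0})"
    using G(1) assms(2) by (simp add: lattice_cone_def)
  then show thesis by (rule that)
qed

locale homogeneous_operator = lattice_direction f d e q
  for f :: "complex ^ 'n \<Rightarrow> complex" and d e q +
  fixes \<sigma> :: "(real ^ 'n) set"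
  assumes cone: "rational_polyhedral_cone \<sigma>" and full: "full_dimensional \<sigma>"
    and H_dvd_f: "poly_dvd (Hpoly \<sigma> d) f"
    and interior_neg_d: "rvec (- d) \<in> interior (dual_cone \<sigma>)"
begin

abbreviation S :: "(int ^ 'n) set" where "S \<equiv> semigrp \<sigma>"

lemma zero_in_S: "0 \<in> S"
  by (simp add: semigrp_def zero_in_dual_cone)

lemma add_in_S: "a \<in> S \<Longrightarrow> b \<in> S \<Longrightarrow> a + b \<in> S"
  by (simp add: semigrp_def rvec_add dual_cone_add)

lemma neg_d_in_S: "- d \<in> S"
  using interior_neg_d interior_subset by (auto simp: semigrp_def)

lemma neg_e_in_S: "- e \<in> S"
proof -
  have "rvec (- e) = (1 / real_of_int q) *\<^sub>R rvec (- d)"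
    using q_pos by (simp add: rvec_d rvec_uminus)
  then show ?thesis using neg_d_in_S q_pos by (auto simp: semigrp_def intro!: dual_cone_scaleR)
qed

lemma scale_in_S: "a \<in> S \<Longrightarrow> 0 \<le> k \<Longrightarrow> k *s a \<in> S"
proof -
  assume a: "a \<in> S"
  have "int m *s a \<in> S" for m
  proof (induction m)
    case 0 then show ?case using zero_in_S by (simp add: vec_eq_iff)
  next
    case (Suc m)
    have "int (Suc m) *s a = int m *s a + a" by (simp add: vec_eq_iff algebra_simps)
    then show ?case using Suc add_in_S a by simp
  qed
  then show "0 \<le> k \<Longrightarrow> k *s a \<in> S" by (metis nonneg_int_cases)
qed

lemma eventually_diff_d_in_S: "\<exists>J::nat. \<forall>j\<ge>J. v - int j *s d \<in> S"
proof -
  obtain \<epsilon> where \<epsilon>: "\<epsilon> > 0" "ball (rvec (- d)) \<epsilon> \<subseteq> dual_cone \<sigma>"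
    using interior_neg_d by (meson mem_interior)
  obtain J :: nat where J: "norm (rvec v) / \<epsilon> < real J" using reals_Archimedean2 by blast
  have "v - int j *s d \<in> S" if "J \<le> j" for j
  proof -
    have "norm (rvec v) < \<epsilon> * real J" using J \<epsilon>(1) by (simp add: divide_less_eq mult.commute)
    moreover have "\<epsilon> * real J \<le> \<epsilon> * real j" using that \<epsilon>(1) by simp
    ultimately have j: "norm (rvec v) < \<epsilon> * real j" "real j > 0"
      using \<epsilon>(1) norm_ge_zero[of "rvec v"] zero_less_mult_iff by fastforce+
    define y where "y = rvec (- d) + (1 / real j) *\<^sub>R rvec v"
    have "dist (rvec (- d)) y < \<epsilon>" using j by (simp add: y_def dist_norm divide_less_eq)
    then have "y \<in> dual_cone \<sigma>" using \<epsilon>(2) by auto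
    then have "real j *\<^sub>R y \<in> dual_cone \<sigma>" by (rule dual_cone_scaleR) simp
    moreover have "real j *\<^sub>R y = rvec (v - int j *s d)"
      using j by (simp add: y_def rvec_diff rvec_scale rvec_uminus scaleR_add_right algebra_simps)
    ultimately show ?thesis by (simp add: semigrp_def)
  qed
  then show ?thesis by blast
qed

lemma exists_nonzero_in_sigma: "\<exists>x\<in>\<sigma>. x \<noteq> 0"
proof (rule ccontr)
  assume "\<not> ?thesis"
  then have "\<sigma> = {} \<or> \<sigma> = {0}" by auto
  then have "aff_dim \<sigma> \<le> 0" by auto
  then show False using full by (simp add: full_dimensional_def)
qed

text \<open>A nonzero \<open>x \<in> \<sigma>\<close> satisfies \<open>x \<bullet> rvec (- d) > 0\<close> because \<open>- d\<close> is interior, so the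
  functional \<open>x\<close> eventually turns negative on \<open>a + j d\<close>.\<close>

lemma eventually_add_d_notin_S: "\<exists>J::nat. \<forall>j\<ge>J. a + int j *s d \<notin> S"
proof -
  obtain \<epsilon> where \<epsilon>: "\<epsilon> > 0" "ball (rvec (- d)) \<epsilon> \<subseteq> dual_cone \<sigma>"
    using interior_neg_d by (meson mem_interior)
  obtain x where x: "x \<in> \<sigma>" "x \<noteq> 0" using exists_nonzero_in_sigma by blast
  define y where "y = rvec (- d) - (\<epsilon> / 2 / norm x) *\<^sub>R x"
  have "dist (rvec (- d)) y < \<epsilon>" using x \<epsilon> by (simp add: y_def dist_norm)
  then have "0 \<le> x \<bullet> y" using x \<epsilon>(2) by (auto simp: dual_cone_def)
  moreover have "\<epsilon> / 2 / norm x * (x \<bullet> x) > 0" using x \<epsilon> by simp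
  ultimately have pos: "x \<bullet> rvec (- d) > 0" by (simp add: y_def inner_diff_right)
  obtain J :: nat where J: "(x \<bullet> rvec a) / (x \<bullet> rvec (- d)) < real J" using reals_Archimedean2 by blast
  have "a + int j *s d \<notin> S" if "J \<le> j" for j
  proof
    assume "a + int j *s d \<in> S"
    then have "0 \<le> x \<bullet> rvec (a + int j *s d)" using x by (auto simp: semigrp_def dual_cone_def)
    also have "x \<bullet> rvec (a + int j *s d) = x \<bullet> rvec a - real j * (x \<bullet> rvec (- d))"
      by (simp add: rvec_add rvec_scale rvec_uminus inner_add_right)
    finally have "real j * (x \<bullet> rvec (- d)) \<le> x \<bullet> rvec a" by simp
    moreover have "x \<bullet> rvec a < real J * (x \<bullet> rvec (- d))" using J pos by (simp add: divide_less_eq)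
    moreover have "real J * (x \<bullet> rvec (- d)) \<le> real j * (x \<bullet> rvec (- d))"
      using that pos by (simp add: mult_right_mono)
    ultimately show False by linarith
  qed
  then show ?thesis by blast
qed

text \<open>If \<open>a + d\<close> leaves \<open>S\<close> through the facet with support function \<open>h\<close>, then
  \<open>0 \<le> h(a) \<le> h(-d) - 1\<close>, so the factor \<open>(h, h(-d) - 1)!\<close> of \<open>H\<^sub>d\<close> vanishes at \<open>a\<close>.\<close>

lemma f_vanishes_at_boundary:
  assumes a: "a \<in> S" and ad: "a + d \<notin> S"
  shows "f (cvec a) = 0"
proof -
  obtain G where G: "lattice_cone (dual_cone \<sigma>) G"
    using dual_cone_lattice_cone cone interior_neg_d by blast
  have "rvec (a + d) \<notin> dual_cone \<sigma>" using ad by (simp add: semigrp_def)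
  then obtain h where h: "h \<in> facet_support_functions (dual_cone \<sigma>)" "rvec h \<bullet> rvec (a + d) < 0"
    using lattice_cone.facet_support_function_negative[OF G] by blast
  have "0 \<le> rvec h \<bullet> rvec a" using h(1) a by (auto simp: facet_support_functions_def semigrp_def)
  moreover have "lin_int h a + lin_int h d < 0" using h(2) by (simp add: inner_rvec lin_int_add)
  ultimately have "lin_int h a \<in> {0..lin_int h (- d) - 1}" by (simp add: inner_rvec lin_int_uminus)
  then have "ffact (lin_cplx h (cvec a)) (lin_int h (- d) - 1) = 0"
    unfolding ffact_def lin_cplx_cvec by (auto intro!: prod_zero)
  then have "Hpoly \<sigma> d (cvec a) = 0"
    unfolding Hpoly_def using lattice_cone.finite_facet_support_functions[OF G] h(1)
    by (auto intro!: prod_zero)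
  moreover obtain Q where "\<forall>x. f x = Hpoly \<sigma> d x * Q x" using H_dvd_f by (auto simp: poly_dvd_def)
  ultimately show ?thesis by simp
qed

end

context homogeneous_operator
begin

definition Exp_pval :: "(int ^ 'n) set" where
  "Exp_pval = {a\<in>S. finite_val a \<and> 0 \<le> last_zero a}"

lemma Exp_pval_eq: "Exp_pval = {a\<in>S. val d f a \<noteq> \<infinity> \<and> val d f a \<noteq> -\<infinity> \<and> pval d f a \<ge> 0}"
proof -
  have "finite_val a \<and> 0 \<le> last_zero a \<longleftrightarrow> val d f a \<noteq> \<infinity> \<and> val d f a \<noteq> -\<infinity> \<and> pval d f a \<ge> 0" for a
    using val_finite_iff[of a] pval_finite[of a] q_pos by (auto simp: zero_le_divide_iff)
  then show ?thesis by (auto simp: Exp_pval_def)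
qed

end

locale fixed_exponent_set = homogeneous_operator f d e q \<sigma>
  for f :: "complex ^ 'n \<Rightarrow> complex" and d e q \<sigma> +
  fixes E :: "(int ^ 'n) set"
  assumes E_subset: "E \<subseteq> S" and E_nonempty: "E \<noteq> {}"
    and E_add: "\<And>x s. x \<in> E \<Longrightarrow> s \<in> S \<Longrightarrow> x + s \<in> E"
    and E_shift: "\<And>a. a + d \<in> E \<longleftrightarrow> a \<in> E \<and> f (cvec a) \<noteq> 0"
begin

lemma E_down: "v + k *s e \<in> E \<Longrightarrow> k' \<le> k \<Longrightarrow> v + k' *s e \<in> E"
proof -
  assume "v + k *s e \<in> E" "k' \<le> k"
  moreover have "(k - k') *s (- e) \<in> S" using \<open>k' \<le> k\<close> neg_e_in_S by (intro scale_in_S) auto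
  ultimately have "v + k *s e + (k - k') *s (- e) \<in> E" using E_add by blast
  then show ?thesis by (simp add: vec_eq_iff algebra_simps)
qed

lemma line_meets_E: "\<exists>k. v + k *s e \<in> E"
proof -
  obtain b where b: "b \<in> E" using E_nonempty by blast
  obtain J :: nat where "\<forall>j\<ge>J. (v - b) - int j *s d \<in> S" using eventually_diff_d_in_S by blast
  then have "b + ((v - b) - int J *s d) \<in> E" using E_add b by blast
  also have "b + ((v - b) - int J *s d) = v + (- (int J * q)) *s e"
    by (simp add: d_eq vec_eq_iff algebra_simps)
  finally show ?thesis ..
qed

lemma line_bdd_above_E: "bdd_above {k. v + k *s e \<in> E}"
proof -
  obtain J :: nat where J: "\<forall>j\<ge>J. v + int j *s d \<notin> S" using eventually_add_d_notin_S by blast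
  have "k < int J * q" if "v + k *s e \<in> E" for k
  proof (rule ccontr)
    assume "\<not> k < int J * q"
    then have "v + (int J * q) *s e \<in> E" using E_down that by simp
    then have "v + int J *s d \<in> S" using E_subset by (auto simp: d_eq vec_eq_iff algebra_simps)
    then show False using J by blast
  qed
  then show ?thesis by (intro bdd_aboveI[of _ "int J * q"]) (simp add: less_imp_le)
qed

definition line_max :: "int ^ 'n \<Rightarrow> int" where
  "line_max v = Sup {k. v + k *s e \<in> E}"

lemma mem_E_iff: "v + k *s e \<in> E \<longleftrightarrow> k \<le> line_max v"
proof
  assume "v + k *s e \<in> E"
  then show "k \<le> line_max v" unfolding line_max_def using line_bdd_above_E by (intro cSup_upper) auto
next
  assume "k \<le> line_max v"
  have "{k. v + k *s e \<in> E} \<noteq> {}" using line_meets_E by blast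
  then have "v + line_max v *s e \<in> E"
    unfolding line_max_def using cSup_int_in[OF _ line_bdd_above_E] by blast
  then show "v + k *s e \<in> E" using E_down \<open>k \<le> line_max v\<close> by blast
qed

text \<open>Inside \<open>E\<close>, a point is a zero of \<open>f\<close> exactly when \<open>\<delta>\<close> pushes it out of \<open>E\<close>.\<close>

lemma zero_steps_below_line_max:
  assumes "k \<le> line_max v" shows "k \<in> zero_steps v \<longleftrightarrow> line_max v - q < k"
proof -
  have "k \<in> zero_steps v \<longleftrightarrow> \<not> v + k *s e + d \<in> E"
    using assms E_shift[of "v + k *s e"] by (simp add: zero_steps_def Vmon_def mem_E_iff)
  also have "\<dots> \<longleftrightarrow> \<not> k + q \<le> line_max v"
    using mem_E_iff[of v "k + q"] by (simp add: d_eq vec_eq_iff algebra_simps)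
  finally show ?thesis by linarith
qed

lemma finite_val_E: "finite_val v" and last_zero_eq_line_max: "last_zero v = line_max v"
proof -
  have max_zero: "line_max v \<in> zero_steps v" using zero_steps_below_line_max q_pos by simp
  have lower: "line_max v - q < k" if "k \<in> zero_steps v" for k
    using zero_steps_below_line_max[of k v] that q_pos by (cases "k \<le> line_max v") auto
  then have "bdd_below (zero_steps v)" by (intro bdd_belowI[of _ "line_max v - q"]) fastforce
  then show fv: "finite_val v" using max_zero unfolding finite_val_def by blast
  have "first_zero v = line_max v - q + 1"
    unfolding first_zero_def using zero_steps_below_line_max[of "line_max v - q + 1" v] q_pos lower
    by (intro cInf_eq_minimum) fastforce+
  then show "last_zero v = line_max v"
    using fv max_zero q_pos by (intro last_zeroI) auto
qed

lemma mem_E_iff_last_zero: "v \<in> E \<longleftrightarrow> 0 \<le> last_zero v"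
  using mem_E_iff[of v 0] by (simp add: last_zero_eq_line_max)

lemma E_eq_Exp_pval: "E = Exp_pval"
  using E_subset by (auto simp: Exp_pval_def mem_E_iff_last_zero finite_val_E)

lemma val_gt_MInf: "val d f a > -\<infinity>"
  using finite_val_E unfolding val_gt_MInf_iff finite_val_def by simp

lemma Vmon'_zeros: "a \<in> Vmon' d f \<Longrightarrow> i \<in> {0..q-1} \<Longrightarrow> a - i *s e \<in> Vmon f"
proof -
  assume "a \<in> Vmon' d f" "i \<in> {0..q-1}"
  then obtain v where v: "a = v + last_zero v *s e" and i: "0 \<le> i" "i < q" by (auto simp: Vmon'_eq)
  then have "last_zero v - i \<in> zero_steps v"
    using zero_steps_below_line_max[of "last_zero v - i" v] by (simp add: last_zero_eq_line_max)
  moreover have "a - i *s e = v + (last_zero v - i) *s e" using v by (simp add: vec_eq_iff algebra_simps)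
  ultimately show ?thesis by (simp only: zero_steps_def mem_Collect_eq)
qed

lemma Vmon'_boundary: "a \<in> Vmon' d f \<Longrightarrow> a \<in> E \<and> a + e \<notin> E"
proof -
  assume "a \<in> Vmon' d f"
  then obtain v where v: "a = v + last_zero v *s e" by (auto simp: Vmon'_eq)
  have ae: "a + e = v + (line_max v + 1) *s e"
    using v by (simp add: last_zero_eq_line_max vec_eq_iff algebra_simps)
  have "a + e \<notin> E" unfolding ae mem_E_iff by simp
  moreover have "a \<in> E" using v mem_E_iff by (simp add: last_zero_eq_line_max)
  ultimately show ?thesis by blast
qed

lemma Vmon'_diff: "a \<in> Vmon' d f \<Longrightarrow> b \<in> Vmon' d f \<Longrightarrow> a - b \<notin> {s - e | s. s \<in> S}"
proof
  assume a: "a \<in> Vmon' d f" and b: "b \<in> Vmon' d f" and "a - b \<in> {s - e | s. s \<in> S}"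
  then obtain s where s: "s \<in> S" "a + e = b + s" by (force simp: algebra_simps)
  then show False using Vmon'_boundary[OF a] Vmon'_boundary[OF b] E_add by metis
qed

text \<open>Every \<open>x \<in> E\<close> lies below its valuation point \<open>vpt x = x + last_zero x \<cdot> e\<close> in the
  direction \<open>- e \<in> S\<close>.\<close>

lemma Vmon'_plus_S: "(Vmon' d f \<inter> S) + S = E"
proof (intro antisym subsetI)
  fix x assume "x \<in> (Vmon' d f \<inter> S) + S"
  then show "x \<in> E" using Vmon'_boundary E_add by (auto simp: set_plus_def)
next
  fix x assume x: "x \<in> E"
  define a where "a = x + last_zero x *s e"
  have aV: "a \<in> Vmon' d f" unfolding Vmon'_eq a_def using finite_val_E by blast
  then have "a \<in> S" using Vmon'_boundary E_subset by blast
  moreover have "last_zero x *s (- e) \<in> S"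
    using x neg_e_in_S by (intro scale_in_S) (simp_all add: mem_E_iff_last_zero)
  moreover have "x = a + last_zero x *s (- e)" by (simp add: a_def vec_eq_iff)
  ultimately show "x \<in> (Vmon' d f \<inter> S) + S" using aV by (metis IntI set_plus_intro)
qed

end

locale admissible_operator = homogeneous_operator f d e q \<sigma>
  for f :: "complex ^ 'n \<Rightarrow> complex" and d e q \<sigma> +
  assumes val_bounded_below: "\<forall>a\<in>S. val d f a > -\<infinity>"
    and Vmon'_zeros_below: "\<forall>a\<in>Vmon' d f. \<forall>i\<in>{0..q-1}. a - i *s e \<in> Vmon f"
    and Vmon'_diff_notin: "\<forall>a\<in>Vmon' d f. \<forall>b\<in>Vmon' d f. a - b \<notin> {s - e | s. s \<in> S}"
begin

text \<open>Following \<open>x + j d\<close> to the last point inside \<open>S\<close> produces a zero of \<open>f\<close>.\<close>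

lemma finite_val_S:
  assumes x: "x \<in> S" shows "finite_val x"
proof -
  obtain J :: nat where "\<forall>j\<ge>J. x + int j *s d \<notin> S" using eventually_add_d_notin_S by blast
  then obtain k where k: "x + int k *s d \<in> S" "x + int (Suc k) *s d \<notin> S"
    using ex_least_nat_less[of "\<lambda>j. x + int j *s d \<notin> S" J] x by auto
  have "x + int (Suc k) *s d = x + int k *s d + d" by (simp add: vec_eq_iff algebra_simps)
  then have "f (cvec (x + int k *s d)) = 0" using f_vanishes_at_boundary k by metis
  then have "int k * q \<in> zero_steps x" by (simp add: zero_steps_def Vmon_def d_eq vec_eq_iff)
  moreover have "zero_steps x = {} \<or> bdd_below (zero_steps x)"
    using val_bounded_below x by (simp add: val_gt_MInf_iff[symmetric])
  ultimately show ?thesis by (auto simp: finite_val_def)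
qed

lemma last_zero_window:
  assumes "finite_val x" "0 \<le> i" "i \<le> q - 1" shows "last_zero x - i \<in> zero_steps x"
proof -
  have "x + last_zero x *s e \<in> Vmon' d f" unfolding Vmon'_eq using assms(1) by blast
  then have "x + last_zero x *s e - i *s e \<in> Vmon f" using Vmon'_zeros_below assms(2,3) by auto
  moreover have "x + last_zero x *s e - i *s e = x + (last_zero x - i) *s e"
    by (simp add: vec_eq_iff algebra_simps)
  ultimately show ?thesis by (simp add: zero_steps_def)
qed

lemma first_zero_eq: "finite_val x \<Longrightarrow> first_zero x = last_zero x - q + 1"
  using last_zero_window[of x "q - 1"] first_zero_le[of x] last_zero(3)[of x] q_pos by fastforce

lemma Exp_pval_nonempty: "Exp_pval \<noteq> {}"
proof -
  define N where "N = nat (- last_zero 0)"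
  define x :: "int ^ 'n" where "x = (- (int N * q)) *s e"
  have "int N *s (- d) \<in> S" using neg_d_in_S by (rule scale_in_S) simp
  moreover have "x = int N *s (- d)" by (simp add: x_def d_eq vec_eq_iff)
  ultimately have xS: "x \<in> S" by simp
  have f0: "finite_val 0" using finite_val_S zero_in_S by blast
  then have fx: "finite_val x" using finite_val_shift[of 0 "- (int N * q)"] by (simp add: x_def)
  have "last_zero x = last_zero 0 + int N * q"
    using last_zero_shift[OF f0, of "- (int N * q)"] by (simp add: x_def)
  moreover have "int N * 1 \<le> int N * q" using q_pos by (intro mult_left_mono) auto
  moreover have "- last_zero 0 \<le> int N" by (simp add: N_def)
  ultimately have "last_zero x \<ge> 0" by linarith
  then show ?thesis using xS fx by (auto simp: Exp_pval_def)
qed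

text \<open>If \<open>x + s\<close> had negative \<open>last_zero\<close>, the valuation points of \<open>x\<close> and \<open>x + s\<close> would
  differ by an element of \<open>S - e\<close>.\<close>

lemma Exp_pval_add:
  assumes x: "x \<in> Exp_pval" and s: "s \<in> S" shows "x + s \<in> Exp_pval"
proof -
  have xS: "x \<in> S" and fx: "finite_val x" and tx: "0 \<le> last_zero x" using x by (auto simp: Exp_pval_def)
  have xsS: "x + s \<in> S" using xS s add_in_S by blast
  have "0 \<le> last_zero (x + s)"
  proof (rule ccontr)
    assume neg: "\<not> 0 \<le> last_zero (x + s)"
    define n where "n = last_zero x - last_zero (x + s) - 1"
    have "n *s (- e) \<in> S" using neg tx neg_e_in_S by (intro scale_in_S) (simp_all add: n_def)
    then have "s + n *s (- e) \<in> S" using s add_in_S by blast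
    moreover have "((x + s) + last_zero (x + s) *s e) - (x + last_zero x *s e) = (s + n *s (- e)) - e"
      by (simp add: n_def vec_eq_iff algebra_simps)
    moreover have "x + last_zero x *s e \<in> Vmon' d f" "(x + s) + last_zero (x + s) *s e \<in> Vmon' d f"
      unfolding Vmon'_eq using fx finite_val_S[OF xsS] by blast+
    ultimately show False using Vmon'_diff_notin by blast
  qed
  then show ?thesis using xsS finite_val_S by (simp add: Exp_pval_def)
qed

lemma Exp_pval_shift: "a + d \<in> Exp_pval \<longleftrightarrow> a \<in> Exp_pval \<and> f (cvec a) \<noteq> 0"
proof
  assume ad: "a + d \<in> Exp_pval"
  then have a: "a \<in> Exp_pval" using Exp_pval_add[OF ad neg_d_in_S] by simp
  then have fa: "finite_val a" by (simp add: Exp_pval_def)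
  have "last_zero a - q \<ge> 0"
    using ad last_zero_shift[OF fa, of q] by (simp add: Exp_pval_def d_eq)
  then have "0 \<notin> zero_steps a" using first_zero_le[OF fa] first_zero_eq[OF fa] by force
  then show "a \<in> Exp_pval \<and> f (cvec a) \<noteq> 0" using a by (simp add: zero_steps_def Vmon_def)
next
  assume a: "a \<in> Exp_pval \<and> f (cvec a) \<noteq> 0"
  then have fa: "finite_val a" and aS: "a \<in> S" and ta: "0 \<le> last_zero a" by (auto simp: Exp_pval_def)
  have "0 \<notin> zero_steps a" using a by (simp add: zero_steps_def Vmon_def)
  then have "\<not> last_zero a < q" using last_zero_window[OF fa, of "last_zero a"] ta by auto
  moreover have "a + d \<in> S" using a aS f_vanishes_at_boundary by blast
  ultimately show "a + d \<in> Exp_pval"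
    using fa last_zero_shift[OF fa, of q] finite_val_shift[of a q] by (simp add: Exp_pval_def d_eq)
qed

end

sublocale admissible_operator \<subseteq> fixed_exponent_set f d e q \<sigma> Exp_pval
proof unfold_locales
  show "Exp_pval \<subseteq> S" by (auto simp: Exp_pval_def)
qed (use Exp_pval_nonempty Exp_pval_add Exp_pval_shift in auto)

context homogeneous_operator
begin

abbreviation fixed_monomial_ideal :: "(int ^ 'n \<Rightarrow> complex) set \<Rightarrow> bool" where
  "fixed_monomial_ideal I \<equiv> monomial_ideal S I \<and> I \<noteq> {\<lambda>c. 0} \<and> delta_op d f ` I = I"

lemma fixed_monomial_ideal_admissible:
  assumes fixed: "fixed_monomial_ideal I"
  shows "admissible_operator f d e q \<sigma>" and "I = support_ideal S Exp_pval"
proof -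
  obtain X where X: "X \<subseteq> S" "I = mono_gen_ideal S X" using fixed by (auto simp: monomial_ideal_def)
  have I: "I = support_ideal S (X + S)"
    unfolding X(2) using zero_in_S add_in_S X(1) by (rule mono_gen_ideal_eq_support_ideal)
  interpret fixed_exponent_set f d e q \<sigma> "X + S"
  proof unfold_locales
    show sub: "X + S \<subseteq> S" using X(1) add_in_S by (auto simp: set_plus_def)
    show "X + S \<noteq> {}" using fixed I by (auto simp: support_ideal_empty)
    show "x + s \<in> X + S" if "x \<in> X + S" "s \<in> S" for x s
      using that add_in_S by (fastforce simp: set_plus_def add.assoc)
    show "a + d \<in> X + S \<longleftrightarrow> a \<in> X + S \<and> f (cvec a) \<noteq> 0" for a
      using delta_op_image_support_ideal_iff[OF sub] fixed I by simp
  qed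
  show "admissible_operator f d e q \<sigma>"
    by unfold_locales (use val_gt_MInf Vmon'_zeros Vmon'_diff in auto)
  show "I = support_ideal S Exp_pval" using I E_eq_Exp_pval by simp
qed

end

context admissible_operator
begin

lemma mono_gen_Vmon'_eq: "mono_gen_ideal S (Vmon' d f \<inter> S) = support_ideal S Exp_pval"
  using mono_gen_ideal_eq_support_ideal[OF zero_in_S add_in_S, of "Vmon' d f \<inter> S"] Vmon'_plus_S
  by simp

lemma fixed_monomial_ideal_iff: "fixed_monomial_ideal J \<longleftrightarrow> J = mono_gen_ideal S (Vmon' d f \<inter> S)"
proof
  assume "fixed_monomial_ideal J"
  then show "J = mono_gen_ideal S (Vmon' d f \<inter> S)"
    using fixed_monomial_ideal_admissible(2) mono_gen_Vmon'_eq by simp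
next
  assume J: "J = mono_gen_ideal S (Vmon' d f \<inter> S)"
  then have "monomial_ideal S J" by (auto simp: monomial_ideal_def)
  moreover have "J \<noteq> {\<lambda>c. 0}"
    using J mono_gen_Vmon'_eq support_ideal_nonzero E_nonempty E_subset by simp
  moreover have "delta_op d f ` J = J"
    using J mono_gen_Vmon'_eq delta_op_image_support_ideal_iff[OF E_subset] E_shift by simp
  ultimately show "fixed_monomial_ideal J" by blast
qed

lemma Exp_mono_gen_Vmon':
  "Exp S (mono_gen_ideal S (Vmon' d f \<inter> S))
    = {a\<in>S. val d f a \<noteq> \<infinity> \<and> val d f a \<noteq> -\<infinity> \<and> pval d f a \<ge> 0}"
  using mono_gen_Vmon'_eq Exp_support_ideal[OF E_subset] Exp_pval_eq by simp

end

context homogeneous_operator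
begin

lemma admissible_operator_iff:
  "admissible_operator f d e q \<sigma> \<longleftrightarrow>
      (\<forall>a\<in>S. val d f a > -\<infinity>) \<and> (\<forall>a\<in>Vmon' d f. \<forall>i\<in>{0..q-1}. a - i *s e \<in> Vmon f)
      \<and> (\<forall>a\<in>Vmon' d f. \<forall>b\<in>Vmon' d f. a - b \<notin> {s - e | s. s \<in> S})"
  using homogeneous_operator_axioms lattice_direction_axioms
  by (simp only: admissible_operator_def admissible_operator_axioms_def homogeneous_operator_def simp_thms)

lemma exists_fixed_monomial_ideal_iff:
  "(\<exists>I. fixed_monomial_ideal I) \<longleftrightarrow> admissible_operator f d e q \<sigma>"
proof
  assume "\<exists>I. fixed_monomial_ideal I"
  then show "admissible_operator f d e q \<sigma>" using fixed_monomial_ideal_admissible(1) by blast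
next
  assume "admissible_operator f d e q \<sigma>"
  then have "fixed_monomial_ideal (mono_gen_ideal S (Vmon' d f \<inter> S))"
    by (simp add: admissible_operator.fixed_monomial_ideal_iff)
  then show "\<exists>I. fixed_monomial_ideal I" by blast
qed

end

theorem mainTheorem10:
  fixes \<sigma> :: "(real ^ 'n) set"
    and f :: "complex ^ 'n \<Rightarrow> complex"
    and d e :: "int ^ 'n"
    and q :: int
  assumes cone: "rational_polyhedral_cone \<sigma>"
    and full: "full_dimensional \<sigma>"
    and strong: "strongly_convex \<sigma>"
    and fpoly: "poly_fun f"
    and fdiv: "poly_dvd (Hpoly \<sigma> d) f"
    and dint: "rvec (- d) \<in> interior (dual_cone \<sigma>)"
    and q: "q \<ge> 1" and e: "primitive e" and de: "d = q *s e"
  shows "((\<exists>I. monomial_ideal (semigrp \<sigma>) I \<and> I \<noteq> {\<lambda>c. 0} \<and> delta_op d f ` I = I)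
       \<longleftrightarrow>
         ((\<forall>a\<in>semigrp \<sigma>. val d f a > -\<infinity>)
        \<and> (\<forall>a\<in>Vmon' d f. \<forall>i\<in>{0..q-1}. a - i *s e \<in> Vmon f)
        \<and> (\<forall>a\<in>Vmon' d f. \<forall>b\<in>Vmon' d f. a - b \<notin> {s - e | s. s \<in> semigrp \<sigma>})))
     \<and> ((\<exists>I. monomial_ideal (semigrp \<sigma>) I \<and> I \<noteq> {\<lambda>c. 0} \<and> delta_op d f ` I = I) \<longrightarrow>
         ((\<forall>J. (monomial_ideal (semigrp \<sigma>) J \<and> J \<noteq> {\<lambda>c. 0} \<and> delta_op d f ` J = J)
              \<longleftrightarrow> J = mono_gen_ideal (semigrp \<sigma>) (Vmon' d f \<inter> semigrp \<sigma>))
       \<and> Exp (semigrp \<sigma>) (mono_gen_ideal (semigrp \<sigma>) (Vmon' d f \<inter> semigrp \<sigma>))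
           = {a\<in>semigrp \<sigma>. val d f a \<noteq> \<infinity> \<and> val d f a \<noteq> -\<infinity> \<and> pval d f a \<ge> 0}))"
proof -
  interpret homogeneous_operator f d e q \<sigma>
    using cone full fdiv dint q e de by unfold_locales
  have "admissible_operator f d e q \<sigma> \<Longrightarrow>
      (\<forall>J. fixed_monomial_ideal J \<longleftrightarrow> J = mono_gen_ideal S (Vmon' d f \<inter> S))
    \<and> Exp S (mono_gen_ideal S (Vmon' d f \<inter> S))
        = {a\<in>S. val d f a \<noteq> \<infinity> \<and> val d f a \<noteq> -\<infinity> \<and> pval d f a \<ge> 0}"
    by (simp add: admissible_operator.fixed_monomial_ideal_iff admissible_operator.Exp_mono_gen_Vmon')
  then show ?thesis
    unfolding admissible_operator_iff[symmetric] exists_fixed_monomial_ideal_iff by blast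
qed

end
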